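(* Let $d\in\{2,3\}$, let $D\in\mathbb{R}^{d\times m}$ and consider a TPS warp with control centers $c_1,\dots,c_l\in\mathbb{R}^d$ and parameter $\lambda$. Let $R\in\mathbb{R}^{d\times d}$ be a rotation and $t\in\mathbb{R}^d$, and apply the same rigid transformation to the datum shape and to the control centers: $D'=RD+t\mathbf{1}^{\top}$ and $c_j'=Rc_j+t$. Denote by $\mathcal{B}(\cdot)$, $Z$ the TPS feature lifting and regularization matrix built from $c_1,\dots,c_l$, and by $\mathcal{B}'(\cdot)$, $Z'$ those built from $c_1',\dots,c_l'$ (same $\lambda$). Then $\mathcal{B}'(D')=\mathcal{B}(D)$ and $Z'=Z$.
   Context: TPS construction: kernel $\phi(r)=r^2\log(r^2)$ ($d=2$) or $\phi(r)=-|r|$ ($d=3$); $K_\lambda\in\mathbb{R}^{l\times l}$ has diagonal entries $\lambda$ and off-diagonal entries $\phi(\|c_j-c_k\|)$; $\tilde{C}=[\tilde{c}_1,\dots,\tilde{c}_l]$ with $\tilde{c}_j=[c_j^{\top},1]^{\top}$; $K_\lambda$ and $\tilde{C}K_\lambda^{-1}\tilde{C}^{\top}$ are assumed invertible; $\bar{\mathcal{E}}_\lambda=K_\lambda^{-1}-K_\lambda^{-1}\tilde{C}^{\top}(\tilde{C}K_\lambda^{-1}\tilde{C}^{\top})^{-1}\tilde{C}K_\lambda^{-1}$ (bending energy matrix, positive semidefinite in the paper's setting) and $\mathcal{E}_\lambda=\begin{bmatrix}\bar{\mathcal{E}}_\lambda\\ (\tilde{C}K_\lambda^{-1}\tilde{C}^{\top})^{-1}\tilde{C}K_\lambda^{-1}\end{bmatrix}$;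 for $p\in\mathbb{R}^d$, $\beta(p)=\mathcal{E}_\lambda^{\top}\begin{bmatrix}\phi_p\\ \tilde{p}\end{bmatrix}$ with $\phi_p=[\phi(\|p-c_j\|)]_{j=1}^l$ and $\tilde{p}=[p^{\top},1]^{\top}$; $\mathcal{B}(D)=[\beta(p_1),\dots,\beta(p_m)]$ for $D=[p_1,\dots,p_m]$; $Z=\sqrt{\bar{\mathcal{E}}_\lambda}$ is the symmetric positive semidefinite square root. $\mathbf{1}\in\mathbb{R}^m$ is the all-ones vector. *)

theory Defs
  imports "HOL-Analysis.Analysis"
begin

text \<open>Dimension d = CARD('d) (2 or 3);
  control centers indexed by the finite type 'l; data points by the finite type 'm.
  The homogeneous coordinate index set {1..d+1} is rendered as 'd option
  (None = the appended coordinate 1); the stacked index set of length l+d+1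
  is rendered as 'l + 'd option.\<close>

definition tps_phi :: "nat \<Rightarrow> real \<Rightarrow> real" where
  "tps_phi d r = (if d = 2 then r\<^sup>2 * ln (r\<^sup>2) else - \<bar>r\<bar>)"

definition tps_K :: "('l::finite \<Rightarrow> real^'d::finite) \<Rightarrow> real \<Rightarrow> real^'l^'l" where
  "tps_K c lam = (\<chi> j k. if j = k then lam else tps_phi CARD('d) (norm (c j - c k)))"

definition tps_Ctil :: "('l::finite \<Rightarrow> real^'d::finite) \<Rightarrow> real^'l^('d option)" where
  "tps_Ctil c = (\<chi> i j. case i of None \<Rightarrow> 1 | Some a \<Rightarrow> c j $ a)"

definition tps_Ebar :: "('l::finite \<Rightarrow> real^'d::finite) \<Rightarrow> real \<Rightarrow> real^'l^'l" where
  "tps_Ebar c lam =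
     (let Ki = matrix_inv (tps_K c lam); Ct = tps_Ctil c in
      Ki - Ki ** transpose Ct ** matrix_inv (Ct ** Ki ** transpose Ct) ** Ct ** Ki)"

definition tps_Elow :: "('l::finite \<Rightarrow> real^'d::finite) \<Rightarrow> real \<Rightarrow> real^'l^('d option)" where
  "tps_Elow c lam =
     (let Ki = matrix_inv (tps_K c lam); Ct = tps_Ctil c in
      matrix_inv (Ct ** Ki ** transpose Ct) ** Ct ** Ki)"

definition tps_E :: "('l::finite \<Rightarrow> real^'d::finite) \<Rightarrow> real \<Rightarrow> real^'l^('l + 'd option)" where
  "tps_E c lam = (\<chi> i j. case i of Inl a \<Rightarrow> tps_Ebar c lam $ a $ j
                                  | Inr b \<Rightarrow> tps_Elow c lam $ b $ j)"

definition tps_beta :: "('l::finite \<Rightarrow> real^'d::finite) \<Rightarrow> real \<Rightarrow> real^'d \<Rightarrow> real^'l" where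
  "tps_beta c lam p = transpose (tps_E c lam) *v
     (\<chi> i. case i of Inl j \<Rightarrow> tps_phi CARD('d) (norm (p - c j))
                   | Inr None \<Rightarrow> 1
                   | Inr (Some a) \<Rightarrow> p $ a)"

definition tps_B :: "('l::finite \<Rightarrow> real^'d::finite) \<Rightarrow> real \<Rightarrow> real^'m::finite^'d \<Rightarrow> real^'m^'l" where
  "tps_B c lam D = (\<chi> j k. tps_beta c lam (column k D) $ j)"

definition psd_sqrt :: "real^'n::finite^'n \<Rightarrow> real^'n^'n" where
  "psd_sqrt A = (THE Z. transpose Z = Z \<and> (\<forall>x. 0 \<le> x \<bullet> (Z *v x)) \<and> Z ** Z = A)"

definition tps_Z :: "('l::finite \<Rightarrow> real^'d::finite) \<Rightarrow> real \<Rightarrow> real^'l^'l" where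
  "tps_Z c lam = psd_sqrt (tps_Ebar c lam)"

end

theory Submission
  imports Defs
begin

text \<open>A rigid motion \<open>p \<mapsto> R p + t\<close> acts on homogeneous coordinates \<open>p~ = [1; p]\<close> by an
  invertible matrix \<open>A\<close>, so \<open>C~' = A C~\<close>, while all pairwise distances, hence \<open>K\<^sub>\<lambda>\<close> and
  \<open>\<phi>\<^sub>p\<close>, are unchanged. Then \<open>C~' K\<^sub>\<lambda>\<^sup>-\<^sup>1 C~'\<^sup>T = A (C~ K\<^sub>\<lambda>\<^sup>-\<^sup>1 C~\<^sup>T) A\<^sup>T\<close> has inverse
  \<open>A\<^sup>-\<^sup>T (C~ K\<^sub>\<lambda>\<^sup>-\<^sup>1 C~\<^sup>T)\<^sup>-\<^sup>1 A\<^sup>-\<^sup>1\<close>: the factors \<open>A\<close> cancel in the bending energy matrix,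
  and the lower block of \<open>E\<^sub>\<lambda>\<close> is multiplied by \<open>A\<^sup>-\<^sup>T\<close>, which cancels against
  \<open>p~' = A p~\<close> in \<open>\<beta>\<close>. As the bending energy matrix is unchanged, so is its square root.\<close>

lemma matrix_inv_inverse:
  fixes A :: "'a::semiring_1^'n::finite^'m::finite"
  assumes "invertible A"
  shows matrix_inv_right: "A ** matrix_inv A = mat 1"
    and matrix_inv_left: "matrix_inv A ** A = mat 1"
proof -
  have "A ** matrix_inv A = mat 1 \<and> matrix_inv A ** A = mat 1"
    using assms unfolding invertible_def matrix_inv_def by (rule someI_ex)
  then show "A ** matrix_inv A = mat 1" "matrix_inv A ** A = mat 1" by auto
qed

lemma matrix_inv_unique:
  fixes A :: "'a::semiring_1^'n::finite^'m::finite"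
  assumes "A ** B = mat 1" "B ** A = mat 1"
  shows "matrix_inv A = B"
proof -
  have "invertible A" using assms unfolding invertible_def by blast
  then have "B = B ** (A ** matrix_inv A)"
    by (simp add: matrix_inv_right)
  also have "\<dots> = matrix_inv A"
    by (metis assms(2) matrix_mul_assoc matrix_mul_lid)
  finally show ?thesis ..
qed

lemma matrix_inv_mult:
  fixes A B :: "'a::semiring_1^'n::finite^'n"
  assumes "invertible A" "invertible B"
  shows "matrix_inv (A ** B) = matrix_inv B ** matrix_inv A"
proof (rule matrix_inv_unique)
  show "A ** B ** (matrix_inv B ** matrix_inv A) = mat 1"
    by (metis assms matrix_inv_right matrix_mul_assoc matrix_mul_rid)
  show "matrix_inv B ** matrix_inv A ** (A ** B) = mat 1"
    by (metis assms matrix_inv_left matrix_mul_assoc matrix_mul_rid)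
qed

lemma matrix_inv_transpose:
  fixes A :: "'a::comm_semiring_1^'n::finite^'m::finite"
  assumes "invertible A"
  shows "matrix_inv (transpose A) = transpose (matrix_inv A)"
  by (rule matrix_inv_unique)
    (simp_all add: matrix_transpose_mul[symmetric] matrix_inv_left matrix_inv_right assms)

lemma invertible_transpose:
  fixes A :: "'a::comm_semiring_1^'n::finite^'m::finite"
  assumes "invertible A"
  shows "invertible (transpose A)"
  unfolding invertible_def
  by (metis assms matrix_inv_left matrix_inv_right matrix_transpose_mul transpose_mat)

lemma sum_UNIV_option:
  fixes f :: "'a::finite option \<Rightarrow> 'b::comm_monoid_add"
  shows "sum f UNIV = f None + (\<Sum>a\<in>UNIV. f (Some a))"
  by (simp add: UNIV_option_conv sum.reindex)

lemma sum_UNIV_sum: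
  fixes f :: "'a::finite + 'b::finite \<Rightarrow> 'c::comm_monoid_add"
  shows "sum f UNIV = (\<Sum>a\<in>UNIV. f (Inl a)) + (\<Sum>b\<in>UNIV. f (Inr b))"
  by (subst UNIV_sum, subst sum.union_disjoint) (auto simp: sum.reindex)

definition hom_coords :: "'a::semiring_1^'d::finite \<Rightarrow> 'a^('d option)" where
  "hom_coords p = (\<chi> i. case i of None \<Rightarrow> 1 | Some a \<Rightarrow> p $ a)"

definition hom_affine :: "'a::semiring_1^'d::finite^'d \<Rightarrow> 'a^'d \<Rightarrow> 'a^('d option)^('d option)" where
  "hom_affine R t = (\<chi> i j. case (i, j) of
       (None, None) \<Rightarrow> 1
     | (None, Some b) \<Rightarrow> 0
     | (Some a, None) \<Rightarrow> t $ a
     | (Some a, Some b) \<Rightarrow> R $ a $ b)"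

lemma hom_affine_hom_coords: "hom_affine R t *v hom_coords p = hom_coords (R *v p + t)"
  by (auto simp: vec_eq_iff hom_affine_def hom_coords_def matrix_vector_mult_def sum_UNIV_option
      add.commute split: option.splits)

lemma hom_affine_mult: "hom_affine R t ** hom_affine S s = hom_affine (R ** S) (R *v s + t)"
  by (auto simp: vec_eq_iff hom_affine_def matrix_matrix_mult_def matrix_vector_mult_def
      sum_UNIV_option add.commute split: option.splits)

lemma hom_affine_mat_1: "hom_affine (mat 1) 0 = mat 1"
  by (auto simp: vec_eq_iff hom_affine_def mat_def split: option.splits)

lemma invertible_hom_affine:
  fixes R :: "'a::comm_ring_1^'d::finite^'d"
  assumes "invertible R"
  shows "invertible (hom_affine R t)"
  unfolding invertible_def
proof (intro exI conjI)
  let ?S = "matrix_inv R"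
  have "R *v (- x) = - (R *v x)" for x :: "'a^'d"
    by (simp add: vec_eq_iff matrix_vector_mult_def sum_negf)
  then have "R *v (- (?S *v t)) = - t"
    by (simp add: matrix_vector_mul_assoc matrix_inv_right assms)
  then show "hom_affine R t ** hom_affine ?S (- (?S *v t)) = mat 1"
    by (simp add: hom_affine_mult matrix_inv_right assms hom_affine_mat_1)
  show "hom_affine ?S (- (?S *v t)) ** hom_affine R t = mat 1"
    by (simp add: hom_affine_mult matrix_inv_left assms hom_affine_mat_1)
qed

lemma norm_orthogonal_matrix_vector_mult:
  fixes R :: "real^'n::finite^'n"
  assumes "orthogonal_matrix R"
  shows "norm (R *v x) = norm x"
proof -
  have "orthogonal_transformation ((*v) R)"
    using assms by (simp add: orthogonal_transformation_matrix matrix_of_matrix_vector_mul)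
  then show ?thesis by (rule orthogonal_transformation_norm)
qed

lemma norm_diff_rigid_motion:
  fixes R :: "real^'n::finite^'n"
  assumes "orthogonal_matrix R"
  shows "norm (R *v x + t - (R *v y + t)) = norm (x - y)"
  using norm_orthogonal_matrix_vector_mult[OF assms, of "x - y"]
  by (simp add: matrix_vector_mult_diff_distrib)

lemma tps_K_rigid_motion:
  assumes "orthogonal_matrix R"
  shows "tps_K (\<lambda>j. R *v c j + t) lam = tps_K c lam"
  unfolding tps_K_def by (simp only: norm_diff_rigid_motion[OF assms])

lemma tps_Ctil_affine: "tps_Ctil (\<lambda>j. R *v c j + t) = hom_affine R t ** tps_Ctil c"
  by (auto simp: vec_eq_iff tps_Ctil_def hom_affine_def matrix_matrix_mult_def
      matrix_vector_mult_def sum_UNIV_option add.commute split: option.splits)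

lemma tps_Ebar_Elow_homogeneous_change:
  fixes c c' :: "'l::finite \<Rightarrow> real^'d::finite" and A :: "real^('d option)^('d option)"
  assumes K: "tps_K c' lam = tps_K c lam"
    and C: "tps_Ctil c' = A ** tps_Ctil c"
    and A: "invertible A"
    and M: "invertible (tps_Ctil c ** matrix_inv (tps_K c lam) ** transpose (tps_Ctil c))"
  shows "tps_Ebar c' lam = tps_Ebar c lam"
    and "tps_Elow c' lam = transpose (matrix_inv A) ** tps_Elow c lam"
proof -
  define Ki where "Ki = matrix_inv (tps_K c lam)"
  define Ct where "Ct = tps_Ctil c"
  define G where "G = Ct ** Ki ** transpose Ct"
  define Mi where "Mi = matrix_inv G"
  have G: "invertible G"
    using M by (simp add: G_def Ct_def Ki_def)
  have "matrix_inv (A ** Ct ** Ki ** transpose (A ** Ct)) = matrix_inv (A ** G ** transpose A)"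
    by (simp add: G_def matrix_transpose_mul matrix_mul_assoc)
  also have "\<dots> = transpose (matrix_inv A) ** Mi ** matrix_inv A"
    using A G
    by (simp add: Mi_def matrix_inv_mult invertible_mult invertible_transpose
        matrix_inv_transpose matrix_mul_assoc)
  finally have Mi': "matrix_inv (A ** Ct ** Ki ** transpose (A ** Ct))
      = transpose (matrix_inv A) ** Mi ** matrix_inv A" .
  have "transpose A ** transpose (matrix_inv A) = mat 1"
    by (metis A matrix_inv_left matrix_transpose_mul transpose_mat)
  then have AAi: "X ** transpose A ** transpose (matrix_inv A) = X" for X :: "real^('d option)^'l"
    by (metis matrix_mul_assoc matrix_mul_rid)
  have AiA: "Y ** matrix_inv A ** A = Y" for Y :: "real^('d option)^'r::finite"
    by (metis A matrix_inv_left matrix_mul_assoc matrix_mul_rid)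
  show "tps_Ebar c' lam = tps_Ebar c lam"
    unfolding tps_Ebar_def Let_def K C Ki_def[symmetric] Ct_def[symmetric] G_def[symmetric]
      Mi_def[symmetric] Mi'
    by (simp add: matrix_transpose_mul matrix_mul_assoc AAi AiA)
  show "tps_Elow c' lam = transpose (matrix_inv A) ** tps_Elow c lam"
    unfolding tps_Elow_def Let_def K C Ki_def[symmetric] Ct_def[symmetric] G_def[symmetric]
      Mi_def[symmetric] Mi'
    by (simp add: matrix_mul_assoc AiA)
qed

lemma invertible_orthogonal_matrix:
  fixes R :: "'a::semiring_1^'n::finite^'n"
  assumes "orthogonal_matrix R"
  shows "invertible R"
  using assms unfolding orthogonal_matrix_def invertible_def by blast

lemma tps_Ebar_Elow_rigid_motion:
  fixes c :: "'l::finite \<Rightarrow> real^'d::finite"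
  assumes R: "orthogonal_matrix R"
    and M: "invertible (tps_Ctil c ** matrix_inv (tps_K c lam) ** transpose (tps_Ctil c))"
  shows "tps_Ebar (\<lambda>j. R *v c j + t) lam = tps_Ebar c lam"
    and "tps_Elow (\<lambda>j. R *v c j + t) lam = transpose (matrix_inv (hom_affine R t)) ** tps_Elow c lam"
proof -
  have "invertible (hom_affine R t)"
    using R by (intro invertible_hom_affine invertible_orthogonal_matrix)
  from tps_Ebar_Elow_homogeneous_change[OF tps_K_rigid_motion[OF R] tps_Ctil_affine this M]
  show "tps_Ebar (\<lambda>j. R *v c j + t) lam = tps_Ebar c lam"
    and "tps_Elow (\<lambda>j. R *v c j + t) lam = transpose (matrix_inv (hom_affine R t)) ** tps_Elow c lam"
    by auto
qed

definition tps_kernel_vec :: "('l::finite \<Rightarrow> real^'d::finite) \<Rightarrow> real^'d \<Rightarrow> real^'l" where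
  "tps_kernel_vec c p = (\<chi> j. tps_phi CARD('d) (norm (p - c j)))"

lemma tps_beta_eq:
  "tps_beta c lam p
     = transpose (tps_Ebar c lam) *v tps_kernel_vec c p + transpose (tps_Elow c lam) *v hom_coords p"
  by (auto simp: vec_eq_iff tps_beta_def tps_E_def tps_kernel_vec_def hom_coords_def
      matrix_vector_mult_def transpose_def sum_UNIV_sum intro!: sum.cong split: option.splits)

lemma tps_kernel_vec_rigid_motion:
  assumes "orthogonal_matrix R"
  shows "tps_kernel_vec (\<lambda>j. R *v c j + t) (R *v p + t) = tps_kernel_vec c p"
  unfolding tps_kernel_vec_def by (simp only: norm_diff_rigid_motion[OF assms])

lemma tps_beta_rigid_motion:
  fixes c :: "'l::finite \<Rightarrow> real^'d::finite"
  assumes R: "orthogonal_matrix R"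
    and M: "invertible (tps_Ctil c ** matrix_inv (tps_K c lam) ** transpose (tps_Ctil c))"
  shows "tps_beta (\<lambda>j. R *v c j + t) lam (R *v p + t) = tps_beta c lam p"
proof -
  let ?A = "hom_affine R t"
  have "invertible ?A"
    using R by (intro invertible_hom_affine invertible_orthogonal_matrix)
  then have "transpose (transpose (matrix_inv ?A) ** tps_Elow c lam) *v hom_coords (R *v p + t)
      = transpose (tps_Elow c lam) *v hom_coords p"
    by (simp add: hom_affine_hom_coords[symmetric] matrix_transpose_mul matrix_vector_mul_assoc
        matrix_mul_assoc[symmetric] matrix_inv_left)
  then show ?thesis
    by (simp add: tps_beta_eq tps_Ebar_Elow_rigid_motion[OF R M] tps_kernel_vec_rigid_motion[OF R])
qed

lemma column_rigid_motion:
  fixes D :: "'a::semiring_1^'m::finite^'d::finite"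
  shows "column k (R ** D + (\<chi> i k. t $ i)) = R *v column k D + t"
  by (simp add: vec_eq_iff column_def matrix_matrix_mult_def matrix_vector_mult_def)

theorem proposition9:
  fixes c :: "'l::finite \<Rightarrow> real^'d::finite"
    and lam :: real
    and D :: "real^'m::finite^'d"
    and R :: "real^'d^'d"
    and t :: "real^'d"
  assumes dim: "CARD('d) = 2 \<or> CARD('d) = 3"
    and K_inv: "invertible (tps_K c lam)"
    and M_inv: "invertible (tps_Ctil c ** matrix_inv (tps_K c lam) ** transpose (tps_Ctil c))"
    and rot: "orthogonal_matrix R" "det R = 1"
  shows "tps_B (\<lambda>j. R *v c j + t) lam (R ** D + (\<chi> i k. t $ i)) = tps_B c lam D
       \<and> tps_Z (\<lambda>j. R *v c j + t) lam = tps_Z c lam"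
proof
  show "tps_B (\<lambda>j. R *v c j + t) lam (R ** D + (\<chi> i k. t $ i)) = tps_B c lam D"
    unfolding tps_B_def column_rigid_motion tps_beta_rigid_motion[OF rot(1) M_inv] ..
  show "tps_Z (\<lambda>j. R *v c j + t) lam = tps_Z c lam"
    unfolding tps_Z_def tps_Ebar_Elow_rigid_motion(1)[OF rot(1) M_inv] ..
qed

end
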